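(* Let $\mathcal{S}\in\mathscr{W}$ be $C^\infty$-smooth with an isolated umbilic point at the north or south pole. Then the umbilic slope at that pole, when it exists and is finite, is an odd integer greater than or equal to $3$. If furthermore $\alpha+1$ is the value of the umbilic slope at that pole, then the limit of $s(\theta)/\sin^\alpha\theta$ as $\theta$ approaches that pole is finite and non-zero.
   Context: $\mathscr{W}$ is the set of embedded $C^2$-smooth topological 2-spheres in $\mathbb{R}^3$ that are rotationally symmetric and strictly convex. A surface in $\mathscr{W}$ is parametrised by the inverse Gauss map with $\theta\in[0,\pi]$ the angle between the outward normal and the symmetry axis ($\theta=0$ north pole, $\theta=\pi$ south pole). With support function $r(\theta)=\vec X\cdot\hat n$, the radii of curvature are $r_1=\frac{\cos^2\theta}{\sin\theta}\frac{d}{d\theta}\left(\frac{r}{\cos\theta}\right)$, $r_2=r''+r$, and the astigmatism is $s=r_2-r_1$; umbilic points are where $s=0$. The umbilic slopes are $\mu_0=\lim_{\theta\to0}\frac{r_2(\theta)-r_2(0)}{r_1(\theta)-r_1(0)}$ and $\mu_\pi=\lim_{\theta\to\pi}\frac{r_2(\theta)-r_2(\pi)}{r_1(\theta)-r_1(\pi)}$. *)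

theory Defs
  imports "HOL-Analysis.Analysis"
begin

text \<open>A rotationally symmetric strictly convex sphere is described by its support
function r(theta), theta in [0,pi] the angle between outward normal and the symmetry axis.\<close>

definition C_infinity :: "(real \<Rightarrow> real) \<Rightarrow> bool" where
  "C_infinity f \<longleftrightarrow> (\<forall>n x. ((deriv ^^ n) f) differentiable (at x))"

text \<open>Smoothness of the surface: the support function, viewed as a function on the unit
sphere, is smooth; for a rotationally symmetric function this means that r extends to a
smooth function on the real line which is even about both poles theta = 0 and theta = pi.\<close>

definition smooth_rot_support :: "(real \<Rightarrow> real) \<Rightarrow> bool" where
  "smooth_rot_support r \<longleftrightarrow> C_infinity r \<and> (\<forall>t. r (- t) = r t) \<and> (\<forall>t. r (pi + t) = r (pi - t))"

text \<open>Radii of curvature.  r2 = r'' + r.  r1 = cos^2/sin * d/dtheta (r/cos) = r + r' cos/sin,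
extended by its limit value r''+r at the poles.\<close>

definition radius2 :: "(real \<Rightarrow> real) \<Rightarrow> real \<Rightarrow> real" where
  "radius2 r \<theta> = deriv (deriv r) \<theta> + r \<theta>"

definition radius1 :: "(real \<Rightarrow> real) \<Rightarrow> real \<Rightarrow> real" where
  "radius1 r \<theta> = (if sin \<theta> = 0 then deriv (deriv r) \<theta> + r \<theta>
                    else r \<theta> + deriv r \<theta> * cos \<theta> / sin \<theta>)"

definition astigmatism :: "(real \<Rightarrow> real) \<Rightarrow> real \<Rightarrow> real" where
  "astigmatism r \<theta> = radius2 r \<theta> - radius1 r \<theta>"

text \<open>Support function of a C-infinity smooth surface in W (strictly convex: both radii
of curvature are positive and finite).\<close>

definition smooth_W :: "(real \<Rightarrow> real) \<Rightarrow> bool" where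
  "smooth_W r \<longleftrightarrow> smooth_rot_support r \<and>
     (\<forall>\<theta>\<in>{0..pi}. radius1 r \<theta> > 0 \<and> radius2 r \<theta> > 0)"

end

(* Let c be the common value of r1 and r2 at the pole.  The function
   G theta = sin theta * (r theta - c) + r' theta * cos theta is smooth, equals
   sin theta * (r1 theta - c) away from the poles, has derivative cos theta * (r2 theta - c), and is
   odd about the pole because r is even there; so the umbilic slope is the limit of theta G' / G.
   A flat G is impossible: a bounded logarithmic derivative theta G' / G <= N forces
   |G theta| >= C theta^N.  Hence G has a finite vanishing order n, odd because G is odd and at
   least 3 because G'(0) = 0, and Taylor's theorem gives theta G' / G --> n as well as
   s = G' / cos - G / sin ~ (n - 1) G^(n)(0) / n! * theta^(n - 1).
   The south pole reduces to the north pole under theta |-> pi - theta. *)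

theory Submission
  imports Defs
begin

definition differentiable_upto :: "nat \<Rightarrow> (real \<Rightarrow> real) \<Rightarrow> bool" where
  "differentiable_upto n f \<longleftrightarrow> (\<forall>k\<le>n. \<forall>x. (deriv ^^ k) f differentiable (at x))"

lemma differentiable_upto_0: "differentiable_upto 0 f \<longleftrightarrow> (\<forall>x. f differentiable (at x))"
  by (simp add: differentiable_upto_def)

lemma differentiable_upto_Suc:
  "differentiable_upto (Suc n) f \<longleftrightarrow> (\<forall>x. f differentiable (at x)) \<and> differentiable_upto n (deriv f)"
proof -
  have "(\<forall>k\<le>Suc n. P k) \<longleftrightarrow> P 0 \<and> (\<forall>k\<le>n. P (Suc k))" for P
    using All_less_Suc2[of "Suc n" P] by (simp add: less_Suc_eq_le)
  then show ?thesis
    unfolding differentiable_upto_def by (simp add: funpow_Suc_right del: funpow.simps)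
qed

lemma C_infinity_iff_differentiable_upto: "C_infinity f \<longleftrightarrow> (\<forall>n. differentiable_upto n f)"
  unfolding C_infinity_def differentiable_upto_def by auto

lemma C_infinity_iff_deriv:
  "C_infinity f \<longleftrightarrow> (\<forall>x. f differentiable (at x)) \<and> C_infinity (deriv f)"
proof -
  have "(\<forall>n. differentiable_upto n f) \<longleftrightarrow> differentiable_upto 0 f \<and> (\<forall>n. differentiable_upto (Suc n) f)"
    by (metis nat.exhaust)
  then show ?thesis
    unfolding C_infinity_iff_differentiable_upto differentiable_upto_0 differentiable_upto_Suc by simp
qed

lemma C_infinity_deriv: "C_infinity f \<Longrightarrow> C_infinity (deriv f)"
  using C_infinity_iff_deriv[of f] by simp

lemma C_infinity_has_real_derivative:
  "C_infinity f \<Longrightarrow> (f has_real_derivative deriv f x) (at x)"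
  using C_infinity_iff_deriv[of f] by (simp add: DERIV_deriv_iff_real_differentiable)

lemma C_infinity_coinduct:
  fixes P :: "(real \<Rightarrow> real) \<Rightarrow> bool"
  assumes "P f" and step: "\<And>g. P g \<Longrightarrow> (\<forall>x. g differentiable (at x)) \<and> P (deriv g)"
  shows "C_infinity f"
proof -
  have "\<forall>g. P g \<longrightarrow> differentiable_upto n g" for n
  proof (induction n)
    case 0
    then show ?case using step by (simp add: differentiable_upto_0)
  next
    case (Suc n)
    then show ?case using step by (simp add: differentiable_upto_Suc)
  qed
  then show ?thesis
    using \<open>P f\<close> by (simp add: C_infinity_iff_differentiable_upto)
qed

lemma C_infinity_const: "C_infinity (\<lambda>x. c)"
  by (rule C_infinity_coinduct[where P = "\<lambda>g. \<exists>c. g = (\<lambda>x. c)"]) auto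

lemma C_infinity_sin_shift: "C_infinity (\<lambda>x. sin (x + a))"
proof (rule C_infinity_coinduct[where P = "\<lambda>g. \<exists>a. g = (\<lambda>x. sin (x + a))"])
  fix g :: "real \<Rightarrow> real" assume "\<exists>a. g = (\<lambda>x. sin (x + a))"
  then obtain a where g: "g = (\<lambda>x. sin (x + a))" by blast
  have "(g has_real_derivative sin (x + (a + pi / 2))) (at x)" for x
    unfolding g by (auto intro!: derivative_eq_intros simp: sin_add cos_add)
  then have "(\<forall>x. g differentiable (at x)) \<and> deriv g = (\<lambda>x. sin (x + (a + pi / 2)))"
    by (auto simp: real_differentiable_def DERIV_imp_deriv)
  then show "(\<forall>x. g differentiable (at x)) \<and> (\<exists>a. deriv g = (\<lambda>x. sin (x + a)))"
    by blast
qed auto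

lemma C_infinity_sin: "C_infinity sin"
  using C_infinity_sin_shift[of 0] by simp

lemma C_infinity_cos: "C_infinity cos"
  using C_infinity_sin_shift[of "pi / 2"] by (simp add: sin_add)

lemma has_real_derivative_scaled_reflect:
  "C_infinity f \<Longrightarrow> ((\<lambda>t. c * f (a - t)) has_real_derivative - c * deriv f (a - t)) (at t)"
  by (auto intro!: derivative_eq_intros DERIV_chain2[OF C_infinity_has_real_derivative])

lemma deriv_scaled_reflect:
  "C_infinity f \<Longrightarrow> deriv (\<lambda>t. c * f (a - t)) = (\<lambda>t. - c * deriv f (a - t))"
  using DERIV_imp_deriv[OF has_real_derivative_scaled_reflect] by blast

lemma C_infinity_reflect: "C_infinity f \<Longrightarrow> C_infinity (\<lambda>t. f (a - t))"
proof (rule C_infinity_coinduct[where P = "\<lambda>g. \<exists>h c. C_infinity h \<and> g = (\<lambda>t. c * h (a - t))"])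
  fix g :: "real \<Rightarrow> real" assume "\<exists>h c. C_infinity h \<and> g = (\<lambda>t. c * h (a - t))"
  then obtain h c where h: "C_infinity h" and g: "g = (\<lambda>t. c * h (a - t))" by blast
  have "\<forall>x. g differentiable (at x)"
    unfolding g using has_real_derivative_scaled_reflect[OF h] real_differentiable_def by blast
  moreover have "deriv g = (\<lambda>t. - c * deriv h (a - t))"
    unfolding g using deriv_scaled_reflect[OF h] .
  ultimately show "(\<forall>x. g differentiable (at x)) \<and> (\<exists>h c. C_infinity h \<and> deriv g = (\<lambda>t. c * h (a - t)))"
    using C_infinity_deriv[OF h] by blast
qed (metis mult_1)

lemma differentiable_upto_add:
  "differentiable_upto n f \<Longrightarrow> differentiable_upto n g \<Longrightarrow> differentiable_upto n (\<lambda>x. f x + g x)"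
proof (induction n arbitrary: f g)
  case 0
  then show ?case by (simp add: differentiable_upto_0)
next
  case (Suc n)
  then have f: "\<forall>x. f differentiable (at x)" "differentiable_upto n (deriv f)"
    and g: "\<forall>x. g differentiable (at x)" "differentiable_upto n (deriv g)"
    by (simp_all add: differentiable_upto_Suc)
  have "deriv (\<lambda>x. f x + g x) = (\<lambda>x. deriv f x + deriv g x)"
  proof
    fix x show "deriv (\<lambda>x. f x + g x) x = deriv f x + deriv g x"
      using f(1) g(1) by (intro DERIV_imp_deriv DERIV_add) (simp_all add: DERIV_deriv_iff_real_differentiable)
  qed
  then show ?case
    using Suc.IH f g by (simp add: differentiable_upto_Suc)
qed

lemma differentiable_upto_mult:
  "C_infinity f \<Longrightarrow> C_infinity g \<Longrightarrow> differentiable_upto n (\<lambda>x. f x * g x)"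
proof (induction n arbitrary: f g)
  case 0
  then show ?case
    using C_infinity_iff_deriv[of f] C_infinity_iff_deriv[of g]
    by (simp add: differentiable_upto_0)
next
  case (Suc n)
  have "deriv (\<lambda>x. f x * g x) = (\<lambda>x. deriv f x * g x + deriv g x * f x)"
  proof
    fix x show "deriv (\<lambda>x. f x * g x) x = deriv f x * g x + deriv g x * f x"
      using Suc.prems by (intro DERIV_imp_deriv DERIV_mult C_infinity_has_real_derivative)
  qed
  moreover have "differentiable_upto n (\<lambda>x. deriv f x * g x + deriv g x * f x)"
    using Suc by (intro differentiable_upto_add Suc.IH C_infinity_deriv)
  moreover have "\<forall>x. (\<lambda>x. f x * g x) differentiable (at x)"
    using Suc.IH[OF Suc.prems] unfolding differentiable_upto_def by (metis funpow_0 le0)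
  ultimately show ?case
    by (simp add: differentiable_upto_Suc)
qed

lemma C_infinity_add: "C_infinity f \<Longrightarrow> C_infinity g \<Longrightarrow> C_infinity (\<lambda>x. f x + g x)"
  by (simp add: C_infinity_iff_differentiable_upto differentiable_upto_add)

lemma C_infinity_mult: "C_infinity f \<Longrightarrow> C_infinity g \<Longrightarrow> C_infinity (\<lambda>x. f x * g x)"
  by (simp add: C_infinity_iff_differentiable_upto differentiable_upto_mult)

lemma C_infinity_tendsto_div_power:
  assumes "C_infinity f" and "\<forall>k<m. (deriv ^^ k) f 0 = 0"
  shows "((\<lambda>t. f t / t ^ m) \<longlongrightarrow> (deriv ^^ m) f 0 / fact m) (at 0)"
  using assms
proof (induction m arbitrary: f)
  case 0
  then show ?case
    using DERIV_isCont[OF C_infinity_has_real_derivative[OF 0(1)]] by (simp add: isCont_def)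
next
  case (Suc m)
  have "\<forall>k<m. (deriv ^^ k) (deriv f) 0 = 0"
    using Suc.prems(2) by (auto simp: funpow_swap1)
  then have lim: "((\<lambda>t. deriv f t / t ^ m) \<longlongrightarrow> (deriv ^^ Suc m) f 0 / fact m) (at 0)"
    using Suc.IH[OF C_infinity_deriv[OF Suc.prems(1)]] by (simp add: funpow_swap1)
  have "isCont f 0" and "f 0 = 0"
    using DERIV_isCont[OF C_infinity_has_real_derivative[OF Suc.prems(1)]] Suc.prems(2) by auto
  show ?case
  proof (rule lhopital)
    show "(f \<longlongrightarrow> 0) (at 0)"
      using \<open>isCont f 0\<close> \<open>f 0 = 0\<close> by (simp add: isCont_def)
    show "((\<lambda>t::real. t ^ Suc m) \<longlongrightarrow> 0) (at 0)"
      by (intro tendsto_eq_intros) auto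
    have nonzero: "\<forall>\<^sub>F t in at 0. t \<noteq> (0::real)"
      by (simp add: eventually_at_filter)
    then show "\<forall>\<^sub>F t in at 0. t ^ Suc m \<noteq> (0::real)"
      by (rule eventually_mono) simp
    from nonzero show "\<forall>\<^sub>F t in at 0. real (Suc m) * t ^ m \<noteq> 0"
      by (rule eventually_mono) simp
    show "\<forall>\<^sub>F t in at 0. (f has_real_derivative deriv f t) (at t)"
      using C_infinity_has_real_derivative[OF Suc.prems(1)] by simp
    show "\<forall>\<^sub>F t in at 0. ((\<lambda>t. t ^ Suc m) has_real_derivative real (Suc m) * t ^ m) (at t)"
      using DERIV_pow[of "Suc m"] by simp
    show "((\<lambda>t. deriv f t / (real (Suc m) * t ^ m)) \<longlongrightarrow> (deriv ^^ Suc m) f 0 / fact (Suc m)) (at 0)"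
      using tendsto_divide[OF lim tendsto_const[of "real (Suc m)"]] by (simp add: field_simps)
  qed
qed

lemma C_infinity_tendsto_deriv_div_power:
  assumes "C_infinity f" and "0 < n" and "\<forall>k<n. (deriv ^^ k) f 0 = 0"
  shows "((\<lambda>t. deriv f t / t ^ (n - 1)) \<longlongrightarrow> real n * ((deriv ^^ n) f 0 / fact n)) (at 0)"
proof -
  have "\<forall>k<n - 1. (deriv ^^ k) (deriv f) 0 = 0"
  proof (intro allI impI)
    fix k assume "k < n - 1"
    then show "(deriv ^^ k) (deriv f) 0 = 0"
      using assms(3)[rule_format, of "Suc k"] by (simp add: funpow_swap1)
  qed
  moreover have "(deriv ^^ (n - 1)) (deriv f) = (deriv ^^ n) f"
    using \<open>0 < n\<close> by (cases n) (simp_all add: funpow_swap1)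
  ultimately have "((\<lambda>t. deriv f t / t ^ (n - 1)) \<longlongrightarrow> (deriv ^^ n) f 0 / fact (n - 1)) (at 0)"
    using C_infinity_tendsto_div_power[OF C_infinity_deriv[OF assms(1)], of "n - 1"] by simp
  moreover have "(deriv ^^ n) f 0 / fact (n - 1) = real n * ((deriv ^^ n) f 0 / fact n)"
    using \<open>0 < n\<close> by (simp add: fact_reduce)
  ultimately show ?thesis by simp
qed

lemma power_lower_bound_of_log_derivative:
  fixes K K' :: "real \<Rightarrow> real" and N :: nat
  assumes deriv: "\<And>s. 0 < s \<Longrightarrow> s \<le> b \<Longrightarrow> (K has_real_derivative K' s) (at s)"
    and nonzero: "\<And>s. 0 < s \<Longrightarrow> s \<le> b \<Longrightarrow> K s \<noteq> 0"
    and bound: "\<And>s. 0 < s \<Longrightarrow> s \<le> b \<Longrightarrow> s * K' s / K s \<le> real N"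
    and "0 < t" "t \<le> b"
  shows "\<bar>K b\<bar> / b ^ N \<le> \<bar>K t\<bar> / t ^ N"
proof -
  define \<phi> where "\<phi> s = ln (K s ^ 2) - 2 * real N * ln s" for s
  have "\<phi> b \<le> \<phi> t"
  proof (rule DERIV_nonpos_imp_nonincreasing[OF \<open>t \<le> b\<close>])
    fix s assume s: "t \<le> s" "s \<le> b"
    then have "0 < s" using \<open>0 < t\<close> by linarith
    have "(\<phi> has_real_derivative 2 / s * (s * K' s / K s - real N)) (at s)"
      unfolding \<phi>_def using deriv[OF \<open>0 < s\<close> s(2)] nonzero[OF \<open>0 < s\<close> s(2)] \<open>0 < s\<close>
      by (auto intro!: derivative_eq_intros simp: field_simps power2_eq_square zero_less_mult_iff)
    moreover have "2 / s * (s * K' s / K s - real N) \<le> 0"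
      using bound[OF \<open>0 < s\<close> s(2)] \<open>0 < s\<close> by (intro mult_nonneg_nonpos) auto
    ultimately show "\<exists>y. (\<phi> has_real_derivative y) (at s) \<and> y \<le> 0" by blast
  qed
  moreover have "\<phi> s = 2 * ln (\<bar>K s\<bar> / s ^ N)" if "0 < s" "s \<le> b" for s
  proof -
    have "ln (K s ^ 2) = ln (\<bar>K s\<bar> ^ 2)"
      by simp
    also have "\<dots> = 2 * ln \<bar>K s\<bar>"
      by (simp only: ln_realpow)
    finally show ?thesis
      using nonzero[OF that] \<open>0 < s\<close> unfolding \<phi>_def
      by (simp add: ln_divide_pos ln_realpow algebra_simps)
  qed
  ultimately show ?thesis
    using assms(4,5) nonzero by simp
qed

lemma flat_C_infinity_log_derivative_unbounded:
  fixes N :: nat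
  assumes "C_infinity K" and flat: "\<forall>k. (deriv ^^ k) K 0 = 0"
  shows "\<not> (\<forall>\<^sub>F t in at_right 0. K t \<noteq> 0 \<and> t * deriv K t / K t \<le> real N)"
proof
  assume "\<forall>\<^sub>F t in at_right 0. K t \<noteq> 0 \<and> t * deriv K t / K t \<le> real N"
  then obtain b where "0 < b" and b: "\<And>t. 0 < t \<Longrightarrow> t < b \<Longrightarrow> K t \<noteq> 0 \<and> t * deriv K t / K t \<le> real N"
    unfolding eventually_at_right_field by auto
  define t0 where "t0 = b / 2"
  have "0 < t0" "t0 < b" using \<open>0 < b\<close> by (auto simp: t0_def)
  have lower: "\<bar>K t0\<bar> / t0 ^ N \<le> t * \<bar>K t / t ^ Suc N\<bar>" if "0 < t" "t \<le> t0" for t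
  proof -
    have "\<bar>K t0\<bar> / t0 ^ N \<le> \<bar>K t\<bar> / t ^ N"
      by (rule power_lower_bound_of_log_derivative[where K' = "deriv K"])
        (use that b \<open>t0 < b\<close> C_infinity_has_real_derivative[OF assms(1)] in auto)
    also have "\<dots> = t * \<bar>K t / t ^ Suc N\<bar>"
      using \<open>0 < t\<close> by simp
    finally show ?thesis .
  qed
  have "((\<lambda>t. K t / t ^ Suc N) \<longlongrightarrow> 0) (at 0)"
    using C_infinity_tendsto_div_power[OF assms(1), of "Suc N"] flat by (simp del: funpow.simps)
  then have "((\<lambda>t. t * \<bar>K t / t ^ Suc N\<bar>) \<longlongrightarrow> 0 * \<bar>0\<bar>) (at_right 0)"
    by (intro tendsto_intros) (simp_all add: filterlim_at_split)
  moreover have "\<forall>\<^sub>F t in at_right 0. \<bar>K t0\<bar> / t0 ^ N \<le> t * \<bar>K t / t ^ Suc N\<bar>"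
    unfolding eventually_at_right_field using \<open>0 < t0\<close> lower by auto
  ultimately have "\<bar>K t0\<bar> / t0 ^ N \<le> 0"
    by (intro tendsto_lowerbound) auto
  moreover have "0 < \<bar>K t0\<bar> / t0 ^ N"
    using b[OF \<open>0 < t0\<close> \<open>t0 < b\<close>] \<open>0 < t0\<close> by simp
  ultimately show False by linarith
qed

lemma odd_function_leading_power_odd:
  fixes K :: "real \<Rightarrow> real"
  assumes odd: "\<And>t. K (- t) = - K t" and lim: "((\<lambda>t. K t / t ^ n) \<longlongrightarrow> c) (at 0)" and "c \<noteq> 0"
  shows "odd n"
proof
  assume "even n"
  have "((\<lambda>t. K t / t ^ n) \<longlongrightarrow> c) (filtermap uminus (at (0::real)))"
    using lim filtermap_at_minus[of "0::real"] by simp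
  then have "((\<lambda>t. K (- t) / (- t) ^ n) \<longlongrightarrow> c) (at 0)"
    by (simp only: filterlim_filtermap)
  then have "((\<lambda>t. - (K t / t ^ n)) \<longlongrightarrow> c) (at 0)"
    using \<open>even n\<close> by (simp add: odd)
  then have "c = - c"
    using tendsto_unique[OF at_neq_bot tendsto_minus[OF lim]] by simp
  with \<open>c \<noteq> 0\<close> show False by simp
qed

lemma tendsto_log_derivative_leading_power:
  fixes K K' :: "real \<Rightarrow> real"
  assumes "((\<lambda>t. K t / t ^ n) \<longlongrightarrow> c) F" and "((\<lambda>t. K' t / t ^ (n - 1)) \<longlongrightarrow> real n * c) F"
    and "c \<noteq> 0" and "0 < n" and "\<forall>\<^sub>F t in F. t \<noteq> 0"
  shows "((\<lambda>t. t * K' t / K t) \<longlongrightarrow> real n) F"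
proof -
  have "((\<lambda>t. (K' t / t ^ (n - 1)) / (K t / t ^ n)) \<longlongrightarrow> real n * c / c) F"
    using assms(1-3) by (intro tendsto_divide) auto
  moreover have "\<forall>\<^sub>F t in F. (K' t / t ^ (n - 1)) / (K t / t ^ n) = t * K' t / K t"
  proof (rule eventually_mono[OF assms(5)])
    fix t :: real assume "t \<noteq> 0"
    moreover have "t ^ n = t * t ^ (n - 1)"
      using \<open>0 < n\<close> by (cases n) simp_all
    ultimately show "(K' t / t ^ (n - 1)) / (K t / t ^ n) = t * K' t / K t"
      by (simp add: field_simps)
  qed
  ultimately show ?thesis
    using \<open>c \<noteq> 0\<close> by (simp add: tendsto_cong)
qed

lemma odd_C_infinity_vanishing_order:
  fixes K :: "real \<Rightarrow> real"
  assumes K: "C_infinity K" and odd: "\<And>t. K (- t) = - K t" and "deriv K 0 = 0"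
    and nonzero: "\<forall>\<^sub>F t in at_right 0. K t \<noteq> 0"
    and lim: "((\<lambda>t. t * deriv K t / K t) \<longlongrightarrow> \<mu>) (at_right 0)"
  obtains n :: nat and c where "odd n" "3 \<le> n" "\<mu> = real n" "c \<noteq> 0"
    "((\<lambda>t. K t / t ^ n) \<longlongrightarrow> c) (at 0)"
    "((\<lambda>t. deriv K t / t ^ (n - 1)) \<longlongrightarrow> real n * c) (at 0)"
proof -
  obtain N :: nat where "\<mu> < real N"
    using reals_Archimedean2 by blast
  have "\<forall>\<^sub>F t in at_right 0. K t \<noteq> 0 \<and> t * deriv K t / K t \<le> real N"
    using eventually_conj[OF nonzero order_tendstoD(2)[OF lim \<open>\<mu> < real N\<close>]]
    by (rule eventually_mono) auto
  then have "\<exists>k. (deriv ^^ k) K 0 \<noteq> 0"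
    using flat_C_infinity_log_derivative_unbounded[OF K] by blast
  define n where "n = (LEAST k. (deriv ^^ k) K 0 \<noteq> 0)"
  define c where "c = (deriv ^^ n) K 0 / fact n"
  have below: "\<forall>k<n. (deriv ^^ k) K 0 = 0"
    unfolding n_def using not_less_Least by blast
  have "(deriv ^^ n) K 0 \<noteq> 0"
    unfolding n_def using LeastI_ex[OF \<open>\<exists>k. _\<close>] .
  then have "c \<noteq> 0"
    by (simp add: c_def)
  have "n \<noteq> 0"
  proof
    assume "n = 0"
    then show False using \<open>(deriv ^^ n) K 0 \<noteq> 0\<close> odd[of 0] by simp
  qed
  have "n \<noteq> 1"
  proof
    assume "n = 1"
    then show False using \<open>(deriv ^^ n) K 0 \<noteq> 0\<close> \<open>deriv K 0 = 0\<close> by simp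
  qed
  have lim_K: "((\<lambda>t. K t / t ^ n) \<longlongrightarrow> c) (at 0)"
    unfolding c_def using C_infinity_tendsto_div_power[OF K below] .
  have lim_dK: "((\<lambda>t. deriv K t / t ^ (n - 1)) \<longlongrightarrow> real n * c) (at 0)"
    unfolding c_def using C_infinity_tendsto_deriv_div_power[OF K _ below] \<open>n \<noteq> 0\<close> by simp
  have "odd n"
    using odd_function_leading_power_odd[OF odd lim_K \<open>c \<noteq> 0\<close>] .
  have "((\<lambda>t. t * deriv K t / K t) \<longlongrightarrow> real n) (at 0)"
    using tendsto_log_derivative_leading_power[OF lim_K lim_dK \<open>c \<noteq> 0\<close>] \<open>n \<noteq> 0\<close>
    by (simp add: eventually_at_filter)
  then have "\<mu> = real n"
    using tendsto_unique[OF trivial_limit_at_right_real lim] by (simp add: filterlim_at_split)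
  moreover have "3 \<le> n"
    using \<open>odd n\<close> \<open>n \<noteq> 1\<close> by presburger
  ultimately show thesis
    using that \<open>odd n\<close> \<open>c \<noteq> 0\<close> lim_K lim_dK by blast
qed

lemma tendsto_id_div_sin: "((\<lambda>t::real. t / sin t) \<longlongrightarrow> 1) (at 0)"
proof -
  have "((\<lambda>t::real. sin t / t) \<longlongrightarrow> 1) (at 0)"
    using DERIV_sin[of 0] by (simp add: has_field_derivative_iff)
  then have "((\<lambda>t::real. inverse (sin t / t)) \<longlongrightarrow> inverse 1) (at 0)"
    by (rule tendsto_inverse) simp
  then show ?thesis
    by (simp add: inverse_divide)
qed

lemma tendsto_leading_power_div_sin_power:
  fixes K K' :: "real \<Rightarrow> real"
  assumes "((\<lambda>t. K t / t ^ n) \<longlongrightarrow> c) (at 0)" and "((\<lambda>t. K' t / t ^ (n - 1)) \<longlongrightarrow> real n * c) (at 0)"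
    and "0 < n"
  shows "((\<lambda>t. (K' t / cos t - K t / sin t) / sin t ^ (n - 1)) \<longlongrightarrow> (real n - 1) * c) (at_right 0)"
proof -
  have "((\<lambda>t. (K' t / t ^ (n - 1)) * (t / sin t) ^ (n - 1) / cos t - (K t / t ^ n) * (t / sin t) ^ n)
      \<longlongrightarrow> real n * c * 1 ^ (n - 1) / cos 0 - c * 1 ^ n) (at 0)"
    using assms tendsto_id_div_sin by (intro tendsto_intros) auto
  moreover have "\<forall>\<^sub>F t in at 0. (K' t / t ^ (n - 1)) * (t / sin t) ^ (n - 1) / cos t - (K t / t ^ n) * (t / sin t) ^ n
      = (K' t / cos t - K t / sin t) / sin t ^ (n - 1)"
  proof -
    have "\<forall>\<^sub>F t in at 0. t \<noteq> 0 \<and> sin t \<noteq> (0::real)"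
      unfolding eventually_at by (rule exI[of _ pi]) (use sin_eq_0_pi in \<open>auto simp: real_norm_def abs_less_iff\<close>)
    then show ?thesis
    proof (rule eventually_mono)
      fix t :: real assume "t \<noteq> 0 \<and> sin t \<noteq> 0"
      moreover have "x ^ n = x * x ^ (n - 1)" for x :: real
        using \<open>0 < n\<close> by (cases n) simp_all
      ultimately show "(K' t / t ^ (n - 1)) * (t / sin t) ^ (n - 1) / cos t - (K t / t ^ n) * (t / sin t) ^ n
          = (K' t / cos t - K t / sin t) / sin t ^ (n - 1)"
        by (simp add: power_divide field_simps)
    qed
  qed
  ultimately have "((\<lambda>t. (K' t / cos t - K t / sin t) / sin t ^ (n - 1))
      \<longlongrightarrow> real n * c * 1 ^ (n - 1) / cos 0 - c * 1 ^ n) (at 0)"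
    by (rule Lim_transform_eventually)
  then show ?thesis
    by (simp add: filterlim_at_split algebra_simps)
qed

definition sin_radius1_diff :: "(real \<Rightarrow> real) \<Rightarrow> real \<Rightarrow> real \<Rightarrow> real" where
  "sin_radius1_diff r c \<theta> = sin \<theta> * (r \<theta> - c) + deriv r \<theta> * cos \<theta>"

lemma sin_radius1_diff_eq: "sin \<theta> \<noteq> 0 \<Longrightarrow> sin_radius1_diff r c \<theta> = sin \<theta> * (radius1 r \<theta> - c)"
  by (simp add: sin_radius1_diff_def radius1_def field_simps)

lemma C_infinity_sin_radius1_diff: "C_infinity r \<Longrightarrow> C_infinity (sin_radius1_diff r c)"
proof -
  assume r: "C_infinity r"
  have "sin_radius1_diff r c = (\<lambda>\<theta>. sin \<theta> * (r \<theta> + - c) + deriv r \<theta> * cos \<theta>)"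
    by (simp add: sin_radius1_diff_def fun_eq_iff)
  moreover have "C_infinity (\<lambda>\<theta>. sin \<theta> * (r \<theta> + - c) + deriv r \<theta> * cos \<theta>)"
    by (intro C_infinity_add C_infinity_mult C_infinity_sin C_infinity_cos C_infinity_const
        C_infinity_deriv r)
  ultimately show ?thesis by simp
qed

lemma sin_radius1_diff_has_real_derivative:
  assumes "C_infinity r"
  shows "(sin_radius1_diff r c has_real_derivative cos \<theta> * (radius2 r \<theta> - c)) (at \<theta>)"
  unfolding sin_radius1_diff_def[abs_def]
  using C_infinity_has_real_derivative[OF assms] C_infinity_has_real_derivative[OF C_infinity_deriv[OF assms]]
  by (auto intro!: derivative_eq_intros simp: radius2_def algebra_simps)

lemma even_function_deriv_odd:
  assumes "C_infinity f" and "\<And>t. f (- t) = f t"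
  shows "deriv f (- t) = - deriv f t"
proof -
  have "(\<lambda>t. 1 * f (0 - t)) = f"
    using assms(2) by simp
  then show ?thesis
    using deriv_scaled_reflect[OF assms(1), of 1 0] by (metis diff_0 minus_minus mult_1 mult_minus_left)
qed

lemma sin_radius1_diff_odd:
  "C_infinity r \<Longrightarrow> (\<And>t. r (- t) = r t) \<Longrightarrow> sin_radius1_diff r c (- \<theta>) = - sin_radius1_diff r c \<theta>"
  by (simp add: sin_radius1_diff_def even_function_deriv_odd algebra_simps)

lemma astigmatism_eq_sin_radius1_diff:
  assumes "C_infinity r" and "sin \<theta> \<noteq> 0" and "cos \<theta> \<noteq> 0"
  shows "astigmatism r \<theta> = deriv (sin_radius1_diff r c) \<theta> / cos \<theta> - sin_radius1_diff r c \<theta> / sin \<theta>"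
  using assms DERIV_imp_deriv[OF sin_radius1_diff_has_real_derivative[OF assms(1)]]
  by (simp add: astigmatism_def sin_radius1_diff_eq)

lemma eventually_sin_cos_pos_at_right_0: "\<forall>\<^sub>F \<theta> in at_right 0. 0 < sin \<theta> \<and> 0 < cos (\<theta>::real)"
  unfolding eventually_at_right_field by (intro exI[of _ "pi / 2"]) (auto intro!: sin_gt_zero cos_gt_zero)

lemma tendsto_log_derivative_sin_radius1_diff:
  assumes r: "C_infinity r" and nonumbilic: "\<forall>\<^sub>F \<theta> in at_right 0. radius1 r \<theta> \<noteq> c"
    and slope: "((\<lambda>\<theta>. (radius2 r \<theta> - c) / (radius1 r \<theta> - c)) \<longlongrightarrow> \<mu>) (at_right 0)"
  shows "((\<lambda>\<theta>. \<theta> * deriv (sin_radius1_diff r c) \<theta> / sin_radius1_diff r c \<theta>) \<longlongrightarrow> \<mu>) (at_right 0)"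
proof -
  have "((\<lambda>\<theta>. \<theta> / sin \<theta> * cos \<theta> * ((radius2 r \<theta> - c) / (radius1 r \<theta> - c))) \<longlongrightarrow> 1 * cos 0 * \<mu>) (at_right 0)"
    using tendsto_id_div_sin slope by (intro tendsto_intros) (simp_all add: filterlim_at_split)
  moreover have "\<forall>\<^sub>F \<theta> in at_right 0. \<theta> / sin \<theta> * cos \<theta> * ((radius2 r \<theta> - c) / (radius1 r \<theta> - c))
      = \<theta> * deriv (sin_radius1_diff r c) \<theta> / sin_radius1_diff r c \<theta>"
    using eventually_sin_cos_pos_at_right_0 nonumbilic
    by eventually_elim (simp add: sin_radius1_diff_eq DERIV_imp_deriv[OF sin_radius1_diff_has_real_derivative[OF r]])
  ultimately show ?thesis
    by (simp add: tendsto_cong)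
qed

lemma umbilic_slope_at_zero:
  fixes r :: "real \<Rightarrow> real"
  assumes r: "C_infinity r" and even: "\<And>t. r (- t) = r t"
    and nonumbilic: "\<forall>\<^sub>F \<theta> in at_right 0. radius1 r \<theta> \<noteq> radius1 r 0"
    and slope: "((\<lambda>\<theta>. (radius2 r \<theta> - radius2 r 0) / (radius1 r \<theta> - radius1 r 0)) \<longlongrightarrow> \<mu>) (at_right 0)"
  obtains n :: nat and L where "odd n" "3 \<le> n" "\<mu> = real n" "L \<noteq> 0"
    "((\<lambda>\<theta>. astigmatism r \<theta> / sin \<theta> ^ (n - 1)) \<longlongrightarrow> L) (at_right 0)"
proof -
  define c where "c = radius1 r 0"
  have "radius2 r 0 = c"
    by (simp add: c_def radius1_def radius2_def)
  define G where "G = sin_radius1_diff r c"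
  have "C_infinity G" and odd: "\<And>t. G (- t) = - G t"
    unfolding G_def using C_infinity_sin_radius1_diff[OF r] sin_radius1_diff_odd[OF r even] by auto
  have "deriv G 0 = 0"
    unfolding G_def using DERIV_imp_deriv[OF sin_radius1_diff_has_real_derivative[OF r]] \<open>radius2 r 0 = c\<close>
    by simp
  have "\<forall>\<^sub>F \<theta> in at_right 0. G \<theta> \<noteq> 0"
    using eventually_sin_cos_pos_at_right_0 nonumbilic
    by eventually_elim (simp add: G_def c_def sin_radius1_diff_eq)
  moreover have "((\<lambda>\<theta>. \<theta> * deriv G \<theta> / G \<theta>) \<longlongrightarrow> \<mu>) (at_right 0)"
    unfolding G_def using tendsto_log_derivative_sin_radius1_diff[OF r] nonumbilic slope \<open>radius2 r 0 = c\<close>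
    by (simp add: c_def)
  ultimately obtain n c' where n: "odd n" "3 \<le> n" "\<mu> = real n" "c' \<noteq> 0"
    and lim_G: "((\<lambda>t. G t / t ^ n) \<longlongrightarrow> c') (at 0)"
    and lim_dG: "((\<lambda>t. deriv G t / t ^ (n - 1)) \<longlongrightarrow> real n * c') (at 0)"
    using odd_C_infinity_vanishing_order[OF \<open>C_infinity G\<close> odd \<open>deriv G 0 = 0\<close>] by blast
  have "((\<lambda>\<theta>. (deriv G \<theta> / cos \<theta> - G \<theta> / sin \<theta>) / sin \<theta> ^ (n - 1)) \<longlongrightarrow> (real n - 1) * c') (at_right 0)"
    using tendsto_leading_power_div_sin_power[OF lim_G lim_dG] n by simp
  moreover have "\<forall>\<^sub>F \<theta> in at_right 0.
      (deriv G \<theta> / cos \<theta> - G \<theta> / sin \<theta>) / sin \<theta> ^ (n - 1) = astigmatism r \<theta> / sin \<theta> ^ (n - 1)"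
    using eventually_sin_cos_pos_at_right_0
    by eventually_elim (simp add: G_def astigmatism_eq_sin_radius1_diff[OF r, where c = c])
  ultimately have "((\<lambda>\<theta>. astigmatism r \<theta> / sin \<theta> ^ (n - 1)) \<longlongrightarrow> (real n - 1) * c') (at_right 0)"
    by (rule Lim_transform_eventually)
  moreover have "(real n - 1) * c' \<noteq> 0"
    using n by simp
  ultimately show thesis
    using that n by blast
qed

lemma radius_reflect:
  assumes "C_infinity r"
  shows "radius1 (\<lambda>t. r (pi - t)) \<theta> = radius1 r (pi - \<theta>)"
    and "radius2 (\<lambda>t. r (pi - t)) \<theta> = radius2 r (pi - \<theta>)"
proof -
  have d1: "deriv (\<lambda>t. r (pi - t)) = (\<lambda>t. - deriv r (pi - t))"
    using deriv_scaled_reflect[OF assms, of 1 pi] by simp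
  have d2: "deriv (\<lambda>t. - deriv r (pi - t)) = (\<lambda>t. deriv (deriv r) (pi - t))"
    using deriv_scaled_reflect[OF C_infinity_deriv[OF assms], of "- 1" pi] by simp
  show "radius1 (\<lambda>t. r (pi - t)) \<theta> = radius1 r (pi - \<theta>)"
    and "radius2 (\<lambda>t. r (pi - t)) \<theta> = radius2 r (pi - \<theta>)"
    by (simp_all add: radius1_def radius2_def d1 d2)
qed

lemma at_left_eq_filtermap_reflect: "at_left (a::real) = filtermap (\<lambda>t. a - t) (at_right 0)"
  by (simp add: at_left_minus at_right_to_0[of "- a"] filtermap_filtermap)

lemma umbilic_slope_at_pi:
  fixes r :: "real \<Rightarrow> real"
  assumes r: "C_infinity r" and even_pi: "\<And>t. r (pi + t) = r (pi - t)"
    and nonumbilic: "\<forall>\<^sub>F \<theta> in at_left pi. radius1 r \<theta> \<noteq> radius1 r pi"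
    and slope: "((\<lambda>\<theta>. (radius2 r \<theta> - radius2 r pi) / (radius1 r \<theta> - radius1 r pi)) \<longlongrightarrow> \<mu>) (at_left pi)"
  obtains n :: nat and L where "odd n" "3 \<le> n" "\<mu> = real n" "L \<noteq> 0"
    "((\<lambda>\<theta>. astigmatism r \<theta> / sin \<theta> ^ (n - 1)) \<longlongrightarrow> L) (at_left pi)"
proof -
  define r' where "r' t = r (pi - t)" for t
  have "C_infinity r'"
    unfolding r'_def[abs_def] using C_infinity_reflect[OF r] .
  have "r' (- t) = r' t" for t
    by (simp add: r'_def even_pi)
  have radius_r': "radius1 r' \<theta> = radius1 r (pi - \<theta>)" "radius2 r' \<theta> = radius2 r (pi - \<theta>)"
    "astigmatism r' \<theta> = astigmatism r (pi - \<theta>)" for \<theta>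
    unfolding r'_def[abs_def] by (simp_all add: radius_reflect[OF r] astigmatism_def)
  have "\<forall>\<^sub>F \<theta> in at_right 0. radius1 r' \<theta> \<noteq> radius1 r' 0"
    using nonumbilic by (simp add: at_left_eq_filtermap_reflect eventually_filtermap radius_r')
  moreover have "((\<lambda>\<theta>. (radius2 r' \<theta> - radius2 r' 0) / (radius1 r' \<theta> - radius1 r' 0)) \<longlongrightarrow> \<mu>) (at_right 0)"
    using slope by (simp add: at_left_eq_filtermap_reflect filterlim_filtermap radius_r')
  ultimately obtain n L where "odd n" "3 \<le> n" "\<mu> = real n" "L \<noteq> 0"
    and lim: "((\<lambda>\<theta>. astigmatism r' \<theta> / sin \<theta> ^ (n - 1)) \<longlongrightarrow> L) (at_right 0)"
    using umbilic_slope_at_zero[OF \<open>C_infinity r'\<close> \<open>\<And>t. r' (- t) = r' t\<close>] by blast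
  moreover have "((\<lambda>\<theta>. astigmatism r \<theta> / sin \<theta> ^ (n - 1)) \<longlongrightarrow> L) (at_left pi)"
    using lim by (simp add: at_left_eq_filtermap_reflect filterlim_filtermap radius_r')
  ultimately show thesis
    using that by blast
qed

lemma umbilic_slope_at_pole:
  fixes r :: "real \<Rightarrow> real"
  assumes "smooth_rot_support r" and "p \<in> {0, pi}"
    and "\<forall>\<^sub>F \<theta> in at p within {0..pi}. radius1 r \<theta> \<noteq> radius1 r p"
    and "((\<lambda>\<theta>. (radius2 r \<theta> - radius2 r p) / (radius1 r \<theta> - radius1 r p)) \<longlongrightarrow> \<mu>)
      (at p within {0..pi})"
  obtains n :: nat and L where "odd n" "3 \<le> n" "\<mu> = real n" "L \<noteq> 0"
    "((\<lambda>\<theta>. astigmatism r \<theta> / sin \<theta> ^ (n - 1)) \<longlongrightarrow> L) (at p within {0..pi})"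
proof -
  have r: "C_infinity r" and even: "\<And>t. r (- t) = r t" and even_pi: "\<And>t. r (pi + t) = r (pi - t)"
    using assms(1) by (auto simp: smooth_rot_support_def)
  consider "p = 0" | "p = pi"
    using assms(2) by blast
  then show thesis
  proof cases
    case 1
    have F: "at 0 within {0..pi} = at_right 0"
      by (simp add: at_within_Icc_at_right)
    show thesis
      using umbilic_slope_at_zero[OF r even] assms(3,4) that unfolding 1 F by blast
  next
    case 2
    have F: "at pi within {0..pi} = at_left pi"
      by (simp add: at_within_Icc_at_left)
    show thesis
      using umbilic_slope_at_pi[OF r even_pi] assms(3,4) that unfolding 2 F by blast
  qed
qed

lemma eventually_sin_pos_at_pole:
  "p \<in> {0, pi} \<Longrightarrow> \<forall>\<^sub>F \<theta> in at p within {0..pi}. 0 < sin \<theta>"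
  unfolding eventually_at by (rule exI[of _ pi]) (auto simp: dist_real_def intro!: sin_gt_zero)

theorem theorem2p3:
  fixes r :: "real \<Rightarrow> real" and p \<mu> :: real
  assumes "smooth_W r"
    and "p \<in> {0, pi}"
    and "\<forall>\<^sub>F \<theta> in at p within {0..pi}. astigmatism r \<theta> \<noteq> 0"
    and "\<forall>\<^sub>F \<theta> in at p within {0..pi}. radius1 r \<theta> \<noteq> radius1 r p"
    and "((\<lambda>\<theta>. (radius2 r \<theta> - radius2 r p) / (radius1 r \<theta> - radius1 r p)) \<longlongrightarrow> \<mu>)
           (at p within {0..pi})"
  shows "(\<exists>k::int. \<mu> = 2 * of_int k + 1) \<and> \<mu> \<ge> 3 \<and>
         (\<forall>\<alpha>. \<mu> = \<alpha> + 1 \<longrightarrow>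
            (\<exists>L. L \<noteq> 0 \<and> ((\<lambda>\<theta>. astigmatism r \<theta> / sin \<theta> powr \<alpha>) \<longlongrightarrow> L) (at p within {0..pi})))"
proof -
  obtain n L where n: "odd n" "3 \<le> n" "\<mu> = real n" "L \<noteq> 0"
    and lim: "((\<lambda>\<theta>. astigmatism r \<theta> / sin \<theta> ^ (n - 1)) \<longlongrightarrow> L) (at p within {0..pi})"
    using umbilic_slope_at_pole[OF _ assms(2,4,5)] assms(1) unfolding smooth_W_def by blast
  obtain k where "n = 2 * k + 1"
    using \<open>odd n\<close> oddE by blast
  then have "\<mu> = 2 * of_int (int k) + 1"
    using n by simp
  moreover have "((\<lambda>\<theta>. astigmatism r \<theta> / sin \<theta> powr \<alpha>) \<longlongrightarrow> L) (at p within {0..pi})"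
    if "\<mu> = \<alpha> + 1" for \<alpha>
  proof -
    have \<alpha>: "\<alpha> = real (n - 1)"
      using that n by (simp add: of_nat_diff)
    have "\<forall>\<^sub>F \<theta> in at p within {0..pi}.
        astigmatism r \<theta> / sin \<theta> ^ (n - 1) = astigmatism r \<theta> / sin \<theta> powr \<alpha>"
      using eventually_sin_pos_at_pole[OF assms(2)] by eventually_elim (simp add: powr_realpow \<alpha>)
    then show ?thesis
      using lim by (rule Lim_transform_eventually[rotated])
  qed
  moreover have "3 \<le> \<mu>"
    using n by simp
  ultimately show ?thesis
    using \<open>L \<noteq> 0\<close> by blast
qed

end
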